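(* Assume $I_1\in L^1(\mu_V)$ and that $I_1,I_2$ are locally bounded. Suppose there exist $\phi\in\hat{\mathscr C}_{j,V}$ with $\phi\ge1$, $h\in C^\infty(\mathbb R^d)$ with $h>0$, and constants $b,r_0>0$ such that for all $x$, $$\hat L_{j,V}\phi(x)\le -h(x)+b\mathbf 1_{B(0,r_0)}(x).$$ If $\int\phi h^{-1}d\mu_V<\infty$ and $\kappa_r<\infty$ for every $r>1$, then there exists $C_1>0$ such that for all $f\in C_b^\infty(\mathbb R^d)$ with $\int f\,d\mu_V=0$, $$\int f^2h\phi^{-1}\,d\mu_V\le C_1D_{j,V}(f,f).$$
   Context: Let $d\ge1$; $V$ locally bounded measurable with $\int e^{-V}<\infty$, $\mu_V(dx)=e^{-V(x)}dx/\int e^{-V}$. $j\ge0$ is measurable and symmetric on $\{(x,y):x\ne y\}$. $I_1(x):=\int(1\wedge|x-y|^2)j(x,y)\mu_V(dy)$, $I_2(x):=\int_{\{|z|\le1\}}|z|\,|j(x,x+z)e^{-V(x+z)}-j(x,x-z)e^{-V(x-z)}|dz$. $D_{j,V}(f,f):=\frac12\iint(f(y)-f(x))^2j(x,y)\mu_V(dy)\mu_V(dx)$. Truncated operator: $\hat L_{j,V}f(x):=\int_{\{|x-y|>1\}}(f(y)-f(x))j(x,y)\mu_V(dy)$. $\hat{\mathscr C}_{j,V}$ is the set of $\phi\in C^\infty(\mathbb R^d)$ such that $x\mapsto\int_{\{|x-y|>1\}}|\phi(y)|j(x,y)\mu_V(dy)$ is locally bounded. $\kappa_r:=\mu_V(B(0,r))^{-2}\sup_{x\in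 B(0,r)}\int_{B(0,r)}j(x,y)^{-1}\mu_V(dy)$. *)

theory Defs
  imports "HOL-Analysis.Analysis" "HOL-Probability.Probability"
begin

fun Ck :: "nat \<Rightarrow> ('a::euclidean_space \<Rightarrow> real) set" where
  "Ck 0 = {f. continuous_on UNIV f}"
| "Ck (Suc k) = {f. f differentiable_on UNIV \<and>
      (\<forall>i\<in>Basis. (\<lambda>x. frechet_derivative f (at x) i) \<in> Ck k)}"

definition smooth :: "('a::euclidean_space \<Rightarrow> real) \<Rightarrow> bool" where
  "smooth f \<longleftrightarrow> (\<forall>k. f \<in> Ck k)"

fun Cbk :: "nat \<Rightarrow> ('a::euclidean_space \<Rightarrow> real) set" where
  "Cbk 0 = {f. continuous_on UNIV f \<and> bounded (range f)}"
| "Cbk (Suc k) = {f. bounded (range f) \<and> f differentiable_on UNIV \<and>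
      (\<forall>i\<in>Basis. (\<lambda>x. frechet_derivative f (at x) i) \<in> Cbk k)}"

definition smooth_bdd :: "('a::euclidean_space \<Rightarrow> real) \<Rightarrow> bool" where
  "smooth_bdd f \<longleftrightarrow> (\<forall>k. f \<in> Cbk k)"

definition locbdd_real :: "('a::euclidean_space \<Rightarrow> real) \<Rightarrow> bool" where
  "locbdd_real g \<longleftrightarrow> (\<forall>K. compact K \<longrightarrow> bounded (g ` K))"

definition locbdd_ennreal :: "('a::euclidean_space \<Rightarrow> ennreal) \<Rightarrow> bool" where
  "locbdd_ennreal g \<longleftrightarrow> (\<forall>K. compact K \<longrightarrow> (\<exists>C::real. \<forall>x\<in>K. g x \<le> ennreal C))"

definition muV :: "('a::euclidean_space \<Rightarrow> real) \<Rightarrow> 'a measure" where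
  "muV V = density lborel
     (\<lambda>x. ennreal (exp (- V x) / (LINT y|lborel. exp (- V y))))"

definition I1 :: "('a::euclidean_space \<Rightarrow> real) \<Rightarrow> ('a \<Rightarrow> 'a \<Rightarrow> real) \<Rightarrow> 'a \<Rightarrow> ennreal" where
  "I1 V j x = (\<integral>\<^sup>+ y. ennreal (min 1 ((norm (x - y))\<^sup>2) * j x y) \<partial>muV V)"

definition I2 :: "('a::euclidean_space \<Rightarrow> real) \<Rightarrow> ('a \<Rightarrow> 'a \<Rightarrow> real) \<Rightarrow> 'a \<Rightarrow> ennreal" where
  "I2 V j x = (\<integral>\<^sup>+ z. indicator (cball 0 1) z *
      ennreal (norm z * \<bar>j x (x + z) * exp (- V (x + z)) - j x (x - z) * exp (- V (x - z))\<bar>)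
      \<partial>lborel)"

definition Dform :: "('a::euclidean_space \<Rightarrow> real) \<Rightarrow> ('a \<Rightarrow> 'a \<Rightarrow> real) \<Rightarrow> ('a \<Rightarrow> real) \<Rightarrow> ennreal" where
  "Dform V j f = (1/2) * (\<integral>\<^sup>+ x. (\<integral>\<^sup>+ y. ennreal ((f y - f x)\<^sup>2 * j x y) \<partial>muV V) \<partial>muV V)"

text \<open>Truncated operator (Bochner integral; the integrand is integrable for phi in hat C).\<close>
definition Lhat :: "('a::euclidean_space \<Rightarrow> real) \<Rightarrow> ('a \<Rightarrow> 'a \<Rightarrow> real) \<Rightarrow> ('a \<Rightarrow> real) \<Rightarrow> 'a \<Rightarrow> real" where
  "Lhat V j f x = (LINT y|muV V. indicator {y. norm (x - y) > 1} y * ((f y - f x) * j x y))"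

definition Chat :: "('a::euclidean_space \<Rightarrow> real) \<Rightarrow> ('a \<Rightarrow> 'a \<Rightarrow> real) \<Rightarrow> ('a \<Rightarrow> real) set" where
  "Chat V j = {\<phi>. smooth \<phi> \<and>
      locbdd_ennreal (\<lambda>x. \<integral>\<^sup>+ y. indicator {y. norm (x - y) > 1} y * ennreal (\<bar>\<phi> y\<bar> * j x y) \<partial>muV V)}"

text \<open>kappa_r (in ennreal; 1/j = \<infinity> where j = 0).\<close>
definition kappa :: "('a::euclidean_space \<Rightarrow> real) \<Rightarrow> ('a \<Rightarrow> 'a \<Rightarrow> real) \<Rightarrow> real \<Rightarrow> ennreal" where
  "kappa V j r = (SUP x\<in>ball 0 r. \<integral>\<^sup>+ y\<in>ball 0 r. inverse (ennreal (j x y)) \<partial>muV V)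
                  / (emeasure (muV V) (ball 0 r))\<^sup>2"

end

theory Submission
  imports Defs
begin

text \<open>
  Since j is symmetric, the far-jump energy of g (the integral of g(x)^2 j(x,y)
  over |x - y| > 1) is half the integral of (g(x)^2 + g(y)^2) j(x,y), and
  g(x)^2 + g(y)^2 \<le> (g(y) - g(x))^2 + g(x)^2 \<phi>(y)/\<phi>(x) + g(y)^2 \<phi>(x)/\<phi>(y).
  Integrating the Lyapunov inequality L \<phi> \<le> -h + b 1_{B(0,r0)} against g^2/\<phi>, the
  \<phi>-weighted terms cancel, leaving \<integral> g^2 h/\<phi> \<le> D(g,g) + b \<integral>_{B(0,r0)} g^2 for bounded g.
  For centred f and any z, Cauchy-Schwarz gives f(z)^2 \<le> \<integral> (f - f(z))^2 h/\<phi> \<cdot> \<integral> \<phi>/h,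
  so applying the previous bound to g = f - f(z) controls \<integral> f^2 h/\<phi> by
  D(f,f) + b \<integral>_B (f - f(z))^2 for a ball B \<supseteq> B(0,r0). Averaging over z \<in> B leaves
  \<integral>_B \<integral>_B (f(x) - f(y))^2, which a local Poincare inequality bounds by D(f,f): by
  \<kappa>_r < \<infinity> and Markov's inequality there is \<epsilon> > 0 such that any two points of B
  both jump with intensity j \<ge> \<epsilon> to a common subset of B of measure \<ge> \<mu>(B)/2.
\<close>

lemma sets_muV [simp, measurable_cong]: "sets (muV V) = sets borel"
  by (simp add: muV_def)

lemma space_muV [simp]: "space (muV V) = UNIV"
  by (simp add: muV_def)

lemma integral_exp_neg_pos:
  fixes V :: "'a::euclidean_space \<Rightarrow> real"
  assumes "integrable lborel (\<lambda>x. exp (- V x))"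
  shows "(LINT y|lborel. exp (- V y)) > 0"
proof -
  have "\<not> (AE x in lborel. exp (- V x) = (0::real))"
    using AE_iff_null_sets[of UNIV "lborel :: 'a measure"] by (simp add: null_sets_def)
  then have "(LINT y|lborel. exp (- V y)) \<noteq> 0"
    using integral_nonneg_eq_0_iff_AE[OF assms] by (metis (no_types) AE_I2 exp_ge_zero)
  moreover have "(LINT y|lborel. exp (- V y)) \<ge> 0"
    by simp
  ultimately show ?thesis
    by linarith
qed

lemma prob_space_muV:
  fixes V :: "'a::euclidean_space \<Rightarrow> real"
  assumes V_meas: "V \<in> borel_measurable borel" and V_int: "integrable lborel (\<lambda>x. exp (- V x))"
  shows "prob_space (muV V)"
proof
  define Z where "Z = (LINT y|lborel. exp (- V y))"
  have Z: "Z > 0" unfolding Z_def using integral_exp_neg_pos[OF V_int] .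
  have "emeasure (muV V) (space (muV V)) = (\<integral>\<^sup>+ x. ennreal (exp (- V x)) * ennreal (1 / Z) \<partial>lborel)"
    unfolding muV_def Z_def[symmetric] using V_meas Z
    by (simp add: emeasure_density ennreal_mult[symmetric])
  also have "\<dots> = ennreal Z * ennreal (1 / Z)"
    unfolding Z_def using V_meas V_int by (simp add: nn_integral_multc nn_integral_eq_integral)
  also have "\<dots> = 1"
    using Z by (simp add: ennreal_mult[symmetric])
  finally show "emeasure (muV V) (space (muV V)) = 1" .
qed

lemma emeasure_muV_ball_pos:
  fixes V :: "'a::euclidean_space \<Rightarrow> real"
  assumes V_meas: "V \<in> borel_measurable borel" and V_int: "integrable lborel (\<lambda>x. exp (- V x))"
    and "r > 0"
  shows "emeasure (muV V) (ball 0 r) > 0"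
proof (rule ccontr)
  define Z where "Z = (LINT y|lborel. exp (- V y))"
  have Z: "Z > 0" unfolding Z_def using integral_exp_neg_pos[OF V_int] .
  assume "\<not> emeasure (muV V) (ball 0 r) > 0"
  then have "ball 0 r \<in> null_sets (muV V)"
    by (simp add: null_sets_def)
  then have "AE x in lborel. x \<in> ball 0 r \<longrightarrow> ennreal (exp (- V x) / Z) = 0"
    unfolding muV_def Z_def[symmetric] using V_meas by (subst (asm) null_sets_density_iff) auto
  then have "AE x in lborel. x \<notin> ball (0::'a) r"
    using Z by (auto elim: AE_mp)
  then have "ball (0::'a) r \<in> null_sets lborel"
    by (subst AE_iff_null_sets) auto
  then show False
    by (metis measure_eq_0_null_sets content_ball_pos[OF assms(3)] less_irrefl)
qed

lemma square_add_le:
  fixes a c :: real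
  shows "(a + c)\<^sup>2 \<le> 2 * a\<^sup>2 + 2 * c\<^sup>2"
  using sum_squares_ge_zero[of "a - c" 0] by (simp add: power2_eq_square algebra_simps)

lemma sum_squares_le_weighted:
  fixes a c p q :: real
  assumes "p > 0" "q > 0"
  shows "a\<^sup>2 + c\<^sup>2 \<le> (c - a)\<^sup>2 + a\<^sup>2 * q / p + c\<^sup>2 * p / q"
proof -
  have "2 * a * c * (p * q) \<le> a\<^sup>2 * q\<^sup>2 + c\<^sup>2 * p\<^sup>2"
    using sum_squares_ge_zero[of "a * q - c * p" 0] by (simp add: power2_eq_square algebra_simps)
  then have "2 * a * c \<le> a\<^sup>2 * q / p + c\<^sup>2 * p / q"
    using assms by (simp add: field_simps power2_eq_square)
  then show ?thesis
    by (simp add: power2_eq_square algebra_simps)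
qed

lemma square_diff_le_large_jumps:
  fixes a b c p q \<epsilon> :: real
  assumes "\<epsilon> > 0" "\<epsilon> \<le> p" "\<epsilon> \<le> q"
  shows "ennreal ((a - c)\<^sup>2) \<le> ennreal (2 / \<epsilon>) * (ennreal ((a - b)\<^sup>2 * p) + ennreal ((c - b)\<^sup>2 * q))"
proof -
  have "(a - c)\<^sup>2 \<le> 2 * (a - b)\<^sup>2 + 2 * (c - b)\<^sup>2"
    using square_add_le[of "a - b" "b - c"] by (simp add: power2_commute[of b c])
  also have "\<dots> = 2 / \<epsilon> * (\<epsilon> * (a - b)\<^sup>2 + \<epsilon> * (c - b)\<^sup>2)"
    using assms(1) by (simp add: field_simps)
  also have "\<dots> \<le> 2 / \<epsilon> * ((a - b)\<^sup>2 * p + (c - b)\<^sup>2 * q)"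
    using assms by (intro mult_left_mono add_mono) (simp_all add: mult.commute mult_right_mono)
  finally have "ennreal ((a - c)\<^sup>2) \<le> ennreal (2 / \<epsilon> * ((a - b)\<^sup>2 * p + (c - b)\<^sup>2 * q))"
    by (rule ennreal_leI)
  moreover have "0 \<le> (a - b)\<^sup>2 * p" "0 \<le> (c - b)\<^sup>2 * q" "0 \<le> 2 / \<epsilon>"
    using assms by auto
  ultimately show ?thesis
    by (simp only: ennreal_mult' ennreal_plus)
qed

lemma integral_square_le_weighted:
  assumes "integrable M u" and [measurable]: "w \<in> borel_measurable M" and "\<And>x. w x > 0"
  shows "ennreal ((\<integral>x. u x \<partial>M)\<^sup>2)
    \<le> (\<integral>\<^sup>+x. ennreal ((u x)\<^sup>2 * w x) \<partial>M) * (\<integral>\<^sup>+x. ennreal (1 / w x) \<partial>M)"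
proof -
  have [measurable]: "u \<in> borel_measurable M"
    using assms(1) by auto
  have "ennreal \<bar>\<integral>x. u x \<partial>M\<bar> \<le> (\<integral>\<^sup>+x. ennreal (\<bar>u x\<bar> * sqrt (w x)) * ennreal (1 / sqrt (w x)) \<partial>M)"
  proof -
    have "ennreal (\<bar>u x\<bar> * sqrt (w x)) * ennreal (1 / sqrt (w x)) = ennreal \<bar>u x\<bar>" for x
      using assms(3)[of x] by (simp add: ennreal_mult[symmetric] less_imp_le)
    then show ?thesis
      using integral_norm_bound_ennreal[OF assms(1)] by simp
  qed
  have "ennreal ((\<integral>x. u x \<partial>M)\<^sup>2) = ennreal (\<bar>\<integral>x. u x \<partial>M\<bar>) ^ 2"
    by (metis abs_ge_zero ennreal_power power2_abs)
  also have "\<dots> \<le> (\<integral>\<^sup>+x. ennreal (\<bar>u x\<bar> * sqrt (w x)) * ennreal (1 / sqrt (w x)) \<partial>M)\<^sup>2"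
    using \<open>ennreal \<bar>_\<bar> \<le> _\<close> by (rule power_mono) simp
  also have "\<dots> \<le> (\<integral>\<^sup>+x. ennreal (\<bar>u x\<bar> * sqrt (w x)) ^ 2 \<partial>M) * (\<integral>\<^sup>+x. ennreal (1 / sqrt (w x)) ^ 2 \<partial>M)"
    by (rule Cauchy_Schwarz_nn_integral) measurable
  also have "\<dots> = (\<integral>\<^sup>+x. ennreal ((u x)\<^sup>2 * w x) \<partial>M) * (\<integral>\<^sup>+x. ennreal (1 / w x) \<partial>M)"
    using assms(3)
    by (simp add: ennreal_power less_imp_le power_mult_distrib power_divide)
  finally show ?thesis .
qed

lemma ennreal_le_divide_right:
  fixes a c K d :: ennreal
  assumes "a * c \<le> K * d" "c \<noteq> 0" "c \<noteq> \<infinity>"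
  shows "a \<le> K / c * d"
proof -
  have "a = a * c / c"
    using assms(2,3) by (simp add: ennreal_mult_divide_eq)
  also have "\<dots> \<le> K * d / c"
    using assms(1) by (rule divide_right_mono_ennreal)
  also have "\<dots> = K / c * d"
    by (simp add: ennreal_times_divide mult.commute)
  finally show ?thesis .
qed

lemma ex_real_constant_of_finite:
  fixes C :: ennreal
  assumes "C < \<infinity>" "\<And>f. P f \<Longrightarrow> a f \<le> C * d f"
  shows "\<exists>C1>0. \<forall>f. P f \<longrightarrow> a f \<le> ennreal C1 * d f"
proof (intro exI[of _ "max 1 (enn2real C)"] conjI allI impI)
  fix f
  assume "P f"
  have "C \<le> ennreal (max 1 (enn2real C))"
    using assms(1) by (cases C) (auto simp: ennreal_leI)
  then show "a f \<le> ennreal (max 1 (enn2real C)) * d f"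
    using assms(2)[OF \<open>P f\<close>] by (meson mult_right_mono order_trans zero_le)
qed simp

lemma (in prob_space) square_weighted_le_centered:
  assumes [measurable]: "f \<in> borel_measurable M" "w \<in> borel_measurable M"
    and f_bound: "\<And>x. \<bar>f x\<bar> \<le> F" and w_pos: "\<And>x. w x > 0" and mean_zero: "(\<integral>x. f x \<partial>M) = 0"
  shows "(\<integral>\<^sup>+x. ennreal ((f x)\<^sup>2 * w x) \<partial>M)
    \<le> 2 * (1 + (\<integral>\<^sup>+x. ennreal (1 / w x) \<partial>M) * (\<integral>\<^sup>+x. ennreal (w x) \<partial>M))
        * (\<integral>\<^sup>+x. ennreal ((f x - f z)\<^sup>2 * w x) \<partial>M)"
proof -
  define Ez where "Ez = (\<integral>\<^sup>+x. ennreal ((f x - f z)\<^sup>2 * w x) \<partial>M)"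
  define Y where "Y = (\<integral>\<^sup>+x. ennreal (1 / w x) \<partial>M)"
  define W where "W = (\<integral>\<^sup>+x. ennreal (w x) \<partial>M)"
  have "integrable M f"
    using f_bound by (intro integrable_const_bound[where B=F]) auto
  then have "integrable M (\<lambda>x. f x - f z)" and "(\<integral>x. f x - f z \<partial>M) = - f z"
    using mean_zero by (simp_all add: prob_space)
  \<comment> \<open>\<open>f z\<close> is minus the mean of \<open>f - f z\<close>, so Cauchy-Schwarz bounds it\<close>
  then have value_at_z: "ennreal ((f z)\<^sup>2) \<le> Ez * Y"
    unfolding Ez_def Y_def using integral_square_le_weighted[OF _ _ w_pos] by fastforce
  have "ennreal ((f x)\<^sup>2 * w x) \<le> 2 * ennreal ((f x - f z)\<^sup>2 * w x) + (2 * ennreal ((f z)\<^sup>2)) * ennreal (w x)" for x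
  proof -
    have "(f x)\<^sup>2 * w x \<le> (2 * (f x - f z)\<^sup>2 + 2 * (f z)\<^sup>2) * w x"
      using square_add_le[of "f x - f z" "f z"] w_pos[of x] by (intro mult_right_mono) simp_all
    then have "ennreal ((f x)\<^sup>2 * w x) \<le> ennreal (2 * ((f x - f z)\<^sup>2 * w x) + 2 * (f z)\<^sup>2 * w x)"
      by (simp add: distrib_right mult.assoc ennreal_leI)
    also have "\<dots> = 2 * ennreal ((f x - f z)\<^sup>2 * w x) + (2 * ennreal ((f z)\<^sup>2)) * ennreal (w x)"
      using w_pos[of x] by (simp add: ennreal_plus ennreal_mult' ennreal_mult)
    finally show ?thesis .
  qed
  then have "(\<integral>\<^sup>+x. ennreal ((f x)\<^sup>2 * w x) \<partial>M)
      \<le> (\<integral>\<^sup>+x. 2 * ennreal ((f x - f z)\<^sup>2 * w x) + (2 * ennreal ((f z)\<^sup>2)) * ennreal (w x) \<partial>M)"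
    by (rule nn_integral_mono)
  also have "\<dots> = 2 * Ez + (2 * ennreal ((f z)\<^sup>2)) * W"
    unfolding Ez_def W_def by (simp add: nn_integral_add nn_integral_cmult)
  also have "\<dots> \<le> 2 * Ez + (2 * (Ez * Y)) * W"
    using value_at_z by (intro add_left_mono mult_right_mono mult_left_mono) auto
  also have "\<dots> = 2 * (1 + Y * W) * Ez"
    by (simp add: algebra_simps)
  finally show ?thesis
    unfolding Ez_def Y_def W_def .
qed

lemma nn_integral_cmult_integrable:
  assumes "integrable M g" "\<And>x. 0 \<le> g x" "0 \<le> c"
  shows "(\<integral>\<^sup>+x. ennreal (c * g x) \<partial>M) = ennreal (c * (\<integral>x. g x \<partial>M))"
  using nn_integral_eq_integral[OF integrable_mult_right[OF assms(1), of c]] assms(2,3) by simp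

lemma measurable_muV_continuous:
  "continuous_on UNIV f \<Longrightarrow> f \<in> borel_measurable (muV V)"
  using borel_measurable_continuous_onI measurable_cong_sets[OF sets_muV refl] by blast

lemma continuous_on_smooth: "smooth f \<Longrightarrow> continuous_on UNIV f"
  unfolding smooth_def by (metis Ck.simps(1) mem_Collect_eq)

lemma continuous_on_bounded_smooth_bdd: "smooth_bdd f \<Longrightarrow> continuous_on UNIV f \<and> bounded (range f)"
  unfolding smooth_bdd_def by (metis Cbk.simps(1) mem_Collect_eq)

lemma double_Dform:
  "2 * Dform V j f = (\<integral>\<^sup>+x. \<integral>\<^sup>+y. ennreal ((f y - f x)\<^sup>2 * j x y) \<partial>muV V \<partial>muV V)"
proof -
  have "(2::ennreal) * (1 / 2) = 1"
    using ennreal_times_divide[of 2 1 2] by simp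
  then show ?thesis
    unfolding Dform_def by (simp only: mult.assoc[symmetric] mult_1)
qed

lemma sets_ball [measurable]: "ball (x::'a::euclidean_space) r \<in> sets borel"
  by simp

locale jump_kernel =
  fixes V :: "'a::euclidean_space \<Rightarrow> real" and j :: "'a \<Rightarrow> 'a \<Rightarrow> real"
  assumes V_meas: "V \<in> borel_measurable borel"
    and V_int: "integrable lborel (\<lambda>x. exp (- V x))"
    and j_meas: "(\<lambda>(x, y). j x y) \<in> borel_measurable borel"
begin

abbreviation \<mu> where "\<mu> \<equiv> muV V"

sublocale mu: prob_space \<mu>
  using prob_space_muV[OF V_meas V_int] .

lemma emeasure_mu_finite: "emeasure \<mu> A < \<infinity>"
  using mu.emeasure_finite by (simp add: less_top[symmetric])

lemma measurable_j [measurable (raw)]: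
  assumes "f \<in> measurable M \<mu>" "g \<in> measurable M \<mu>"
  shows "(\<lambda>x. j (f x) (g x)) \<in> borel_measurable M"
proof -
  have "sets (\<mu> \<Otimes>\<^sub>M \<mu>) = sets (borel :: ('a \<times> 'a) measure)"
    using sets_pair_measure_cong[OF sets_muV sets_muV] by (metis borel_prod)
  then have "(\<lambda>(x, y). j x y) \<in> borel_measurable (\<mu> \<Otimes>\<^sub>M \<mu>)"
    using j_meas measurable_cong_sets by blast
  from measurable_comp[OF measurable_Pair[OF assms] this] show ?thesis
    by (simp add: comp_def)
qed

lemma measurable_nn_integral_mu [measurable (raw)]:
  "case_prod f \<in> borel_measurable (N \<Otimes>\<^sub>M \<mu>) \<Longrightarrow> (\<lambda>x. \<integral>\<^sup>+ y. f x y \<partial>\<mu>) \<in> borel_measurable N"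
  by (rule mu.borel_measurable_nn_integral)

lemma sets_jump_less [measurable]: "{z. j x z < \<epsilon>} \<in> sets borel"
proof -
  have "{z \<in> space \<mu>. j x z < \<epsilon>} \<in> sets \<mu>"
    by measurable
  then show ?thesis
    by simp
qed

lemma sets_jump_ge [measurable]: "{z. \<epsilon> \<le> j x z} \<in> sets borel"
proof -
  have "{z \<in> space \<mu>. \<epsilon> \<le> j x z} \<in> sets \<mu>"
    by measurable
  then show ?thesis
    by simp
qed

lemma nn_integral_swap:
  assumes "(\<lambda>(x, y). F x y) \<in> borel_measurable (\<mu> \<Otimes>\<^sub>M \<mu>)"
  shows "(\<integral>\<^sup>+x. \<integral>\<^sup>+y. F y x \<partial>\<mu> \<partial>\<mu>) = (\<integral>\<^sup>+x. \<integral>\<^sup>+y. F x y \<partial>\<mu> \<partial>\<mu>)"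
  using pair_sigma_finite.Fubini'[OF _ assms] mu.sigma_finite_measure_axioms
  by (simp add: pair_sigma_finite_def)

lemma nn_integral_double_add:
  assumes [measurable]: "(\<lambda>(x, y). F x y) \<in> borel_measurable (\<mu> \<Otimes>\<^sub>M \<mu>)"
    "(\<lambda>(x, y). G x y) \<in> borel_measurable (\<mu> \<Otimes>\<^sub>M \<mu>)"
  shows "(\<integral>\<^sup>+x. \<integral>\<^sup>+y. F x y + G x y \<partial>\<mu> \<partial>\<mu>)
    = (\<integral>\<^sup>+x. \<integral>\<^sup>+y. F x y \<partial>\<mu> \<partial>\<mu>) + (\<integral>\<^sup>+x. \<integral>\<^sup>+y. G x y \<partial>\<mu> \<partial>\<mu>)"
proof -
  have "(\<integral>\<^sup>+y. F x y + G x y \<partial>\<mu>) = (\<integral>\<^sup>+y. F x y \<partial>\<mu>) + (\<integral>\<^sup>+y. G x y \<partial>\<mu>)" for x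
    using measurable_Pair2[OF assms(1), of x] measurable_Pair2[OF assms(2), of x]
    by (intro nn_integral_add) simp_all
  then show ?thesis
    by (simp add: nn_integral_add)
qed

section \<open>A local Poincare inequality on balls\<close>

lemma sup_inverse_jump_finite:
  assumes "kappa V j r < \<infinity>"
  shows "(SUP x\<in>ball 0 r. \<integral>\<^sup>+ y\<in>ball 0 r. inverse (ennreal (j x y)) \<partial>\<mu>) < \<infinity>"
proof (rule ccontr)
  assume "\<not> ?thesis"
  then have sup_top: "(SUP x\<in>ball 0 r. \<integral>\<^sup>+ y\<in>ball 0 r. inverse (ennreal (j x y)) \<partial>\<mu>) = \<infinity>"
    by (metis infinity_ennreal_def top.not_eq_extremum)
  have "(emeasure \<mu> (ball 0 r))\<^sup>2 \<noteq> \<infinity>"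
    using emeasure_mu_finite[of "ball 0 r"] by (simp add: power_eq_top_ennreal)
  then have "kappa V j r = \<infinity>"
    unfolding kappa_def sup_top by (simp add: ennreal_divide_eq_top_iff)
  with assms show False
    by simp
qed

lemma emeasure_small_jumps_le:
  assumes [measurable]: "B \<in> sets borel" and "\<epsilon> > 0"
  shows "emeasure \<mu> (B \<inter> {z. j x z < \<epsilon>}) \<le> ennreal \<epsilon> * (\<integral>\<^sup>+ z\<in>B. inverse (ennreal (j x z)) \<partial>\<mu>)"
proof -
  have markov: "indicator (B \<inter> {z. j x z < \<epsilon>}) z \<le> ennreal \<epsilon> * (inverse (ennreal (j x z)) * indicator B z)"
    for z
  proof (cases "z \<in> B \<and> j x z < \<epsilon>")
    case True
    have "1 \<le> ennreal \<epsilon> * inverse (ennreal (j x z))"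
    proof (cases "j x z \<le> 0")
      case False
      then have "1 \<le> \<epsilon> * inverse (j x z)"
        using True by (simp add: field_simps)
      then show ?thesis
        using False assms(2) by (simp add: inverse_ennreal ennreal_mult[symmetric] ennreal_leI)
    next
      case True
      \<comment> \<open>\<open>ennreal\<close> truncates \<open>j x z \<le> 0\<close> to \<open>0\<close>, whose inverse is \<open>\<infinity>\<close>\<close>
      then have "ennreal (j x z) = 0"
        by (simp add: ennreal_eq_0_iff)
      then show ?thesis
        using assms(2) by (simp add: ennreal_mult_top)
    qed
    with True show ?thesis
      by simp
  qed (auto simp: indicator_def)
  have "B \<inter> {z. j x z < \<epsilon>} \<in> sets \<mu>"
    by measurable
  then have "emeasure \<mu> (B \<inter> {z. j x z < \<epsilon>}) = (\<integral>\<^sup>+ z. indicator (B \<inter> {z. j x z < \<epsilon>}) z \<partial>\<mu>)"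
    by (rule nn_integral_indicator[symmetric])
  also have "\<dots> \<le> (\<integral>\<^sup>+ z. ennreal \<epsilon> * (inverse (ennreal (j x z)) * indicator B z) \<partial>\<mu>)"
    using markov by (rule nn_integral_mono)
  also have "\<dots> = ennreal \<epsilon> * (\<integral>\<^sup>+ z\<in>B. inverse (ennreal (j x z)) \<partial>\<mu>)"
    by (intro nn_integral_cmult) measurable
  finally show ?thesis .
qed

lemma small_jumps_quarter:
  assumes "r > 0" "kappa V j r < \<infinity>"
  obtains \<epsilon> where "\<epsilon> > 0"
    "\<And>x. x \<in> ball 0 r \<Longrightarrow> 4 * measure \<mu> (ball 0 r \<inter> {z. j x z < \<epsilon>}) \<le> measure \<mu> (ball 0 r)"
proof -
  define Mr where "Mr = enn2real (SUP x\<in>ball 0 r. \<integral>\<^sup>+ y\<in>ball 0 r. inverse (ennreal (j x y)) \<partial>\<mu>)"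
  define \<epsilon> where "\<epsilon> = measure \<mu> (ball 0 r) / (4 * (Mr + 1))"
  have M: "(SUP x\<in>ball 0 r. \<integral>\<^sup>+ y\<in>ball 0 r. inverse (ennreal (j x y)) \<partial>\<mu>) = ennreal Mr"
    unfolding Mr_def using sup_inverse_jump_finite[OF assms(2)] by simp
  have "measure \<mu> (ball 0 r) > 0"
    using emeasure_muV_ball_pos[OF V_meas V_int assms(1)] by (simp add: mu.emeasure_eq_measure)
  moreover have "Mr \<ge> 0"
    by (simp add: Mr_def)
  ultimately have "\<epsilon> > 0" and \<epsilon>_Mr: "4 * \<epsilon> * Mr \<le> measure \<mu> (ball 0 r)"
    unfolding \<epsilon>_def by (simp_all add: field_simps)
  moreover have "4 * measure \<mu> (ball 0 r \<inter> {z. j x z < \<epsilon>}) \<le> measure \<mu> (ball 0 r)"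
    if "x \<in> ball 0 r" for x
  proof -
    have "emeasure \<mu> (ball 0 r \<inter> {z. j x z < \<epsilon>})
        \<le> ennreal \<epsilon> * (\<integral>\<^sup>+ z\<in>ball 0 r. inverse (ennreal (j x z)) \<partial>\<mu>)"
      using \<open>\<epsilon> > 0\<close> by (intro emeasure_small_jumps_le) simp_all
    also have "\<dots> \<le> ennreal (\<epsilon> * Mr)"
      unfolding ennreal_mult'[OF less_imp_le[OF \<open>\<epsilon> > 0\<close>]] M[symmetric]
      using that by (intro mult_left_mono SUP_upper) simp_all
    finally have "measure \<mu> (ball 0 r \<inter> {z. j x z < \<epsilon>}) \<le> \<epsilon> * Mr"
      using \<open>\<epsilon> > 0\<close> \<open>Mr \<ge> 0\<close> by (simp add: mu.emeasure_eq_measure)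
    with \<epsilon>_Mr show ?thesis
      by linarith
  qed
  ultimately show ?thesis
    using that by blast
qed

lemma measure_common_large_jumps:
  assumes [measurable]: "B \<in> sets borel"
    and quarter: "\<And>x. x \<in> B \<Longrightarrow> 4 * measure \<mu> (B \<inter> {z. j x z < \<epsilon>}) \<le> measure \<mu> B"
    and "x \<in> B" "y \<in> B"
  shows "measure \<mu> B \<le> 2 * measure \<mu> (B \<inter> {z. \<epsilon> \<le> j x z} \<inter> {z. \<epsilon> \<le> j y z})"
proof -
  define G where "G = B \<inter> {z. \<epsilon> \<le> j x z} \<inter> {z. \<epsilon> \<le> j y z}"
  have sets: "G \<in> sets \<mu>" "B \<inter> {z. j x z < \<epsilon>} \<in> sets \<mu>" "B \<inter> {z. j y z < \<epsilon>} \<in> sets \<mu>"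
    unfolding G_def by measurable
  have "B = G \<union> (B \<inter> {z. j x z < \<epsilon>}) \<union> (B \<inter> {z. j y z < \<epsilon>})"
    unfolding G_def by auto
  then have "measure \<mu> B = measure \<mu> (G \<union> (B \<inter> {z. j x z < \<epsilon>}) \<union> (B \<inter> {z. j y z < \<epsilon>}))"
    by (rule arg_cong)
  also have "\<dots> \<le> measure \<mu> (G \<union> (B \<inter> {z. j x z < \<epsilon>})) + measure \<mu> (B \<inter> {z. j y z < \<epsilon>})"
    using sets by (intro measure_Un_le) auto
  also have "\<dots> \<le> measure \<mu> G + measure \<mu> (B \<inter> {z. j x z < \<epsilon>}) + measure \<mu> (B \<inter> {z. j y z < \<epsilon>})"
    using sets by (simp add: measure_Un_le)
  finally have "measure \<mu> B \<le> \<dots>" .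
  with quarter[OF \<open>x \<in> B\<close>] quarter[OF \<open>y \<in> B\<close>] show ?thesis
    unfolding G_def by linarith
qed

lemma pair_difference_le_jump_energy:
  assumes [measurable]: "B \<in> sets borel" "f \<in> borel_measurable \<mu>"
    and "\<epsilon> > 0"
    and quarter: "\<And>x. x \<in> B \<Longrightarrow> 4 * measure \<mu> (B \<inter> {z. j x z < \<epsilon>}) \<le> measure \<mu> B"
    and "x \<in> B" "y \<in> B"
  shows "ennreal ((f x - f y)\<^sup>2 * measure \<mu> B)
    \<le> ennreal (4 / \<epsilon>) * ((\<integral>\<^sup>+z\<in>B. ennreal ((f x - f z)\<^sup>2 * j x z) \<partial>\<mu>)
                          + (\<integral>\<^sup>+z\<in>B. ennreal ((f y - f z)\<^sup>2 * j y z) \<partial>\<mu>))"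
proof -
  define G where "G = B \<inter> {z. \<epsilon> \<le> j x z} \<inter> {z. \<epsilon> \<le> j y z}"
  have G_sets [measurable]: "G \<in> sets \<mu>"
    unfolding G_def by measurable
  have pointwise: "ennreal ((f x - f y)\<^sup>2) * indicator G z
      \<le> ennreal (2 / \<epsilon>) * (ennreal ((f x - f z)\<^sup>2 * j x z) * indicator B z
                           + ennreal ((f y - f z)\<^sup>2 * j y z) * indicator B z)" for z
  proof (cases "z \<in> G")
    case True
    then show ?thesis
      using square_diff_le_large_jumps[OF \<open>\<epsilon> > 0\<close>, where a="f x" and b="f z" and c="f y"]
      by (simp add: G_def)
  qed simp
  have "(f x - f y)\<^sup>2 * measure \<mu> B \<le> 2 * ((f x - f y)\<^sup>2 * measure \<mu> G)"
    using mult_left_mono[OF measure_common_large_jumps[OF assms(1) quarter \<open>x \<in> B\<close> \<open>y \<in> B\<close>],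
        of "(f x - f y)\<^sup>2"]
    unfolding G_def by (simp add: mult.left_commute)
  then have "ennreal ((f x - f y)\<^sup>2 * measure \<mu> B) \<le> ennreal (2 * ((f x - f y)\<^sup>2 * measure \<mu> G))"
    by (rule ennreal_leI)
  also have "\<dots> = 2 * (\<integral>\<^sup>+z. ennreal ((f x - f y)\<^sup>2) * indicator G z \<partial>\<mu>)"
    using nn_integral_cmult_indicator[OF G_sets, of "ennreal ((f x - f y)\<^sup>2)"]
    by (simp add: mu.emeasure_eq_measure ennreal_mult)
  also have "\<dots> \<le> 2 * (\<integral>\<^sup>+z. ennreal (2 / \<epsilon>) * (ennreal ((f x - f z)\<^sup>2 * j x z) * indicator B z
                           + ennreal ((f y - f z)\<^sup>2 * j y z) * indicator B z) \<partial>\<mu>)"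
    using pointwise by (intro mult_left_mono nn_integral_mono) simp_all
  also have "\<dots> = 2 * ennreal (2 / \<epsilon>) * ((\<integral>\<^sup>+z\<in>B. ennreal ((f x - f z)\<^sup>2 * j x z) \<partial>\<mu>)
                          + (\<integral>\<^sup>+z\<in>B. ennreal ((f y - f z)\<^sup>2 * j y z) \<partial>\<mu>))"
    by (simp add: nn_integral_cmult nn_integral_add mult.assoc)
  also have "2 * ennreal (2 / \<epsilon>) = ennreal (4 / \<epsilon>)"
    using ennreal_mult[of 2 "2 / \<epsilon>"] \<open>\<epsilon> > 0\<close> by simp
  finally show ?thesis .
qed

lemma nn_integral_set_symmetric_sum:
  assumes [measurable]: "B \<in> sets borel" "A \<in> borel_measurable \<mu>"
  shows "(\<integral>\<^sup>+x\<in>B. (\<integral>\<^sup>+y\<in>B. A x + A y \<partial>\<mu>) \<partial>\<mu>) = 2 * emeasure \<mu> B * (\<integral>\<^sup>+x\<in>B. A x \<partial>\<mu>)"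
proof -
  have B_sets: "B \<in> sets \<mu>"
    by simp
  have "(\<integral>\<^sup>+y\<in>B. A x + A y \<partial>\<mu>) = A x * emeasure \<mu> B + (\<integral>\<^sup>+y\<in>B. A y \<partial>\<mu>)" for x
    using B_sets by (simp add: distrib_right nn_integral_add nn_integral_cmult_indicator)
  then have "(\<integral>\<^sup>+x\<in>B. (\<integral>\<^sup>+y\<in>B. A x + A y \<partial>\<mu>) \<partial>\<mu>)
      = (\<integral>\<^sup>+x. emeasure \<mu> B * (A x * indicator B x) + (\<integral>\<^sup>+y\<in>B. A y \<partial>\<mu>) * indicator B x \<partial>\<mu>)"
    by (simp add: distrib_left distrib_right mult_ac)
  also have "\<dots> = emeasure \<mu> B * (\<integral>\<^sup>+x\<in>B. A x \<partial>\<mu>) + (\<integral>\<^sup>+y\<in>B. A y \<partial>\<mu>) * emeasure \<mu> B"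
    using B_sets by (subst nn_integral_add) (simp_all add: nn_integral_cmult nn_integral_cmult_indicator)
  finally show ?thesis
    by (simp add: mult_2 distrib_right mult_ac)
qed

lemma local_poincare_ball:
  assumes [measurable]: "B \<in> sets borel" "f \<in> borel_measurable \<mu>"
    and "\<epsilon> > 0"
    and quarter: "\<And>x. x \<in> B \<Longrightarrow> 4 * measure \<mu> (B \<inter> {z. j x z < \<epsilon>}) \<le> measure \<mu> B"
    and "measure \<mu> B > 0"
  shows "(\<integral>\<^sup>+x\<in>B. (\<integral>\<^sup>+y\<in>B. ennreal ((f x - f y)\<^sup>2) \<partial>\<mu>) \<partial>\<mu>) \<le> ennreal (16 / \<epsilon>) * Dform V j f"
proof -
  define m where "m = measure \<mu> B"
  define A where "A x = ennreal (4 / (\<epsilon> * m)) * (\<integral>\<^sup>+z\<in>B. ennreal ((f x - f z)\<^sup>2 * j x z) \<partial>\<mu>)" for x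
  have A_meas [measurable]: "A \<in> borel_measurable \<mu>"
    unfolding A_def by measurable
  have "0 < m"
    using \<open>measure \<mu> B > 0\<close> by (simp add: m_def)
  have pair: "ennreal ((f x - f y)\<^sup>2) \<le> A x + A y" if "x \<in> B" "y \<in> B" for x y
  proof -
    have "ennreal (1 / m) * ennreal ((f x - f y)\<^sup>2 * m)
        \<le> ennreal (1 / m) * (ennreal (4 / \<epsilon>) * ((\<integral>\<^sup>+z\<in>B. ennreal ((f x - f z)\<^sup>2 * j x z) \<partial>\<mu>)
                                      + (\<integral>\<^sup>+z\<in>B. ennreal ((f y - f z)\<^sup>2 * j y z) \<partial>\<mu>)))"
      unfolding m_def using pair_difference_le_jump_energy[OF assms(1-4) that] by (rule mult_left_mono[OF _ zero_le])
    then show ?thesis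
      unfolding A_def using \<open>0 < m\<close> \<open>\<epsilon> > 0\<close>
      by (simp add: ennreal_mult[symmetric] mult.assoc[symmetric] distrib_left mult.commute[of \<epsilon>])
  qed
  have "(\<integral>\<^sup>+x\<in>B. (\<integral>\<^sup>+y\<in>B. ennreal ((f x - f y)\<^sup>2) \<partial>\<mu>) \<partial>\<mu>) \<le> (\<integral>\<^sup>+x\<in>B. (\<integral>\<^sup>+y\<in>B. A x + A y \<partial>\<mu>) \<partial>\<mu>)"
    using pair by (intro nn_integral_mono) (auto simp: indicator_def intro!: nn_integral_mono)
  also have "\<dots> = 2 * ennreal m * (\<integral>\<^sup>+x\<in>B. A x \<partial>\<mu>)"
    unfolding nn_integral_set_symmetric_sum[OF assms(1) A_meas] m_def by (simp add: mu.emeasure_eq_measure)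
  also have "\<dots> = ennreal (8 / \<epsilon>) * (\<integral>\<^sup>+x\<in>B. (\<integral>\<^sup>+z\<in>B. ennreal ((f x - f z)\<^sup>2 * j x z) \<partial>\<mu>) \<partial>\<mu>)"
  proof -
    have "2 * ennreal m * ennreal (4 / (\<epsilon> * m)) = ennreal (2 * m) * ennreal (4 / (\<epsilon> * m))"
      using \<open>0 < m\<close> by (simp add: ennreal_mult)
    also have "\<dots> = ennreal (2 * m * (4 / (\<epsilon> * m)))"
      using \<open>0 < m\<close> \<open>\<epsilon> > 0\<close> by (intro ennreal_mult[symmetric]) auto
    also have "\<dots> = ennreal (8 / \<epsilon>)"
      using \<open>0 < m\<close> by simp
    finally have "2 * ennreal m * ennreal (4 / (\<epsilon> * m)) = ennreal (8 / \<epsilon>)" .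
    moreover have "(\<integral>\<^sup>+x\<in>B. A x \<partial>\<mu>)
        = ennreal (4 / (\<epsilon> * m)) * (\<integral>\<^sup>+x\<in>B. (\<integral>\<^sup>+z\<in>B. ennreal ((f x - f z)\<^sup>2 * j x z) \<partial>\<mu>) \<partial>\<mu>)"
      unfolding A_def mult.assoc by (rule nn_integral_cmult) measurable
    ultimately show ?thesis
      by (simp only: mult.assoc[symmetric])
  qed
  also have "\<dots> \<le> ennreal (8 / \<epsilon>) * (2 * Dform V j f)"
    unfolding double_Dform
    by (intro mult_left_mono nn_integral_mono) (auto simp: indicator_def power2_commute intro!: nn_integral_mono)
  also have "\<dots> = ennreal (16 / \<epsilon>) * Dform V j f"
    using ennreal_mult[of "8 / \<epsilon>" 2] \<open>\<epsilon> > 0\<close> by (simp add: mult.assoc[symmetric])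
  finally show ?thesis .
qed

lemma local_poincare:
  assumes "r > 0" "kappa V j r < \<infinity>"
  obtains C where "\<And>f. f \<in> borel_measurable \<mu> \<Longrightarrow>
    (\<integral>\<^sup>+x\<in>ball 0 r. (\<integral>\<^sup>+y\<in>ball 0 r. ennreal ((f x - f y)\<^sup>2) \<partial>\<mu>) \<partial>\<mu>) \<le> ennreal C * Dform V j f"
proof -
  obtain \<epsilon> where "\<epsilon> > 0" and
    quarter: "\<And>x. x \<in> ball 0 r \<Longrightarrow> 4 * measure \<mu> (ball 0 r \<inter> {z. j x z < \<epsilon>}) \<le> measure \<mu> (ball 0 r)"
    using small_jumps_quarter[OF assms] by blast
  have "measure \<mu> (ball 0 r) > 0"
    using emeasure_muV_ball_pos[OF V_meas V_int assms(1)] by (simp add: mu.emeasure_eq_measure)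
  then show ?thesis
    by (auto intro!: that[of "16 / \<epsilon>"] local_poincare_ball[OF _ _ \<open>\<epsilon> > 0\<close> quarter])
qed

end

section \<open>The Lyapunov condition\<close>

locale lyapunov_kernel = jump_kernel V j
  for V :: "'a::euclidean_space \<Rightarrow> real" and j +
  fixes \<phi> h :: "'a \<Rightarrow> real" and b r0 :: real
  assumes j_nonneg: "\<forall>x y. x \<noteq> y \<longrightarrow> 0 \<le> j x y"
    and j_sym: "\<forall>x y. x \<noteq> y \<longrightarrow> j x y = j y x"
    and I1_L1: "(\<integral>\<^sup>+ x. I1 V j x \<partial>muV V) < \<infinity>"
    and I1_locbdd: "locbdd_ennreal (I1 V j)"
    and phi_C: "\<phi> \<in> Chat V j"
    and phi_ge: "\<forall>x. \<phi> x \<ge> 1"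
    and h_smooth: "smooth h"
    and h_pos: "\<forall>x. h x > 0"
    and b_pos: "b > 0"
    and lyap: "\<forall>x. Lhat V j \<phi> x \<le> - h x + b * indicator (ball 0 r0) x"
begin

abbreviation far_jump where "far_jump x y \<equiv> indicator {y. 1 < norm (x - y)} y * j x y"

lemma far_jump_nonneg: "0 \<le> far_jump x y"
  using j_nonneg by (cases "x = y") (auto simp: indicator_def)

lemma far_jump_sym: "far_jump x y = far_jump y x"
  using j_sym by (cases "x = y") (auto simp: indicator_def norm_minus_commute)

lemma phi_pos: "\<phi> x > 0"
  using phi_ge by (auto intro: less_le_trans[OF zero_less_one])

lemma measurable_phi [measurable]: "\<phi> \<in> borel_measurable \<mu>"
  using phi_C by (auto simp: Chat_def intro: measurable_muV_continuous continuous_on_smooth)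

lemma measurable_h [measurable]: "h \<in> borel_measurable \<mu>"
  using h_smooth by (auto intro: measurable_muV_continuous continuous_on_smooth)

lemma integrable_far_jump: "integrable \<mu> (far_jump x)"
proof (rule integrableI_nonneg)
  have "compact {x}"
    by simp
  then obtain C :: real where "\<forall>z\<in>{x}. I1 V j z \<le> ennreal C"
    using I1_locbdd unfolding locbdd_ennreal_def by blast
  then have C: "I1 V j x \<le> ennreal C"
    by simp
  have "ennreal (far_jump x y) \<le> ennreal (min 1 ((norm (x - y))\<^sup>2) * j x y)" for y
  proof (cases "1 < norm (x - y)")
    case True
    then have "min 1 ((norm (x - y))\<^sup>2) = 1"
      by (simp add: one_le_power)
    with True show ?thesis
      by simp
  qed simp
  then have "(\<integral>\<^sup>+y. ennreal (far_jump x y) \<partial>\<mu>) \<le> I1 V j x"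
    unfolding I1_def by (rule nn_integral_mono)
  also note C
  finally have "(\<integral>\<^sup>+y. ennreal (far_jump x y) \<partial>\<mu>) < top"
    using ennreal_less_top by (rule le_less_trans)
  then show "(\<integral>\<^sup>+y. ennreal (far_jump x y) \<partial>\<mu>) < \<infinity>"
    by simp
  show "AE y in \<mu>. 0 \<le> far_jump x y"
    using far_jump_nonneg by simp
qed measurable

lemma integrable_far_jump_phi: "integrable \<mu> (\<lambda>y. \<phi> y * far_jump x y)"
proof (rule integrableI_nonneg)
  have "compact {x}"
    by simp
  then obtain C :: real where
    "\<forall>z\<in>{x}. (\<integral>\<^sup>+ y. indicator {y. norm (z - y) > 1} y * ennreal (\<bar>\<phi> y\<bar> * j z y) \<partial>\<mu>) \<le> ennreal C"
    using phi_C unfolding Chat_def locbdd_ennreal_def by blast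
  then have C: "(\<integral>\<^sup>+ y. indicator {y. norm (x - y) > 1} y * ennreal (\<bar>\<phi> y\<bar> * j x y) \<partial>\<mu>) \<le> ennreal C"
    by simp
  have "(\<integral>\<^sup>+y. ennreal (\<phi> y * far_jump x y) \<partial>\<mu>)
      = (\<integral>\<^sup>+ y. indicator {y. norm (x - y) > 1} y * ennreal (\<bar>\<phi> y\<bar> * j x y) \<partial>\<mu>)"
    using phi_pos by (intro nn_integral_cong) (auto simp: indicator_def abs_of_pos)
  also note C
  finally have "(\<integral>\<^sup>+y. ennreal (\<phi> y * far_jump x y) \<partial>\<mu>) < top"
    using ennreal_less_top by (rule le_less_trans)
  then show "(\<integral>\<^sup>+y. ennreal (\<phi> y * far_jump x y) \<partial>\<mu>) < \<infinity>"
    by simp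
  show "AE y in \<mu>. 0 \<le> \<phi> y * far_jump x y"
    by (intro AE_I2 mult_nonneg_nonneg less_imp_le[OF phi_pos] far_jump_nonneg)
qed measurable

lemma Lhat_phi_eq:
  "Lhat V j \<phi> x = (\<integral>y. \<phi> y * far_jump x y \<partial>\<mu>) - \<phi> x * (\<integral>y. far_jump x y \<partial>\<mu>)"
proof -
  have "Lhat V j \<phi> x = (\<integral>y. \<phi> y * far_jump x y - \<phi> x * far_jump x y \<partial>\<mu>)"
    unfolding Lhat_def by (intro Bochner_Integration.integral_cong) (simp_all add: left_diff_distrib right_diff_distrib mult_ac)
  also have "\<dots> = (\<integral>y. \<phi> y * far_jump x y \<partial>\<mu>) - (\<integral>y. \<phi> x * far_jump x y \<partial>\<mu>)"
    by (rule Bochner_Integration.integral_diff[OF integrable_far_jump_phi integrable_mult_right[OF integrable_far_jump]])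
  finally show ?thesis
    by (simp only: integral_mult_right_zero)
qed

lemma lyapunov_pointwise_real:
  assumes "0 \<le> c"
  shows "c * h x / \<phi> x + c / \<phi> x * (\<integral>y. \<phi> y * far_jump x y \<partial>\<mu>)
    \<le> c * (\<integral>y. far_jump x y \<partial>\<mu>) + b * c * indicator (ball 0 r0) x"
proof -
  define P where "P = (\<integral>y. \<phi> y * far_jump x y \<partial>\<mu>)"
  define J where "J = (\<integral>y. far_jump x y \<partial>\<mu>)"
  define I where "I = (indicator (ball 0 r0) x :: real)"
  have "0 \<le> I" "1 \<le> \<phi> x"
    using phi_ge by (auto simp: I_def)
  have "P - \<phi> x * J \<le> - h x + b * I"
    using lyap Lhat_phi_eq unfolding P_def J_def I_def by metis
  then have "c / \<phi> x * P \<le> c / \<phi> x * (\<phi> x * J - h x + b * I)"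
    using \<open>0 \<le> c\<close> \<open>1 \<le> \<phi> x\<close> by (intro mult_left_mono) auto
  also have "\<dots> = c * J - c * h x / \<phi> x + c * b * I / \<phi> x"
    using \<open>1 \<le> \<phi> x\<close> by (simp add: field_simps)
  also have "c * b * I / \<phi> x \<le> c * b * I"
    using \<open>0 \<le> c\<close> \<open>0 \<le> I\<close> \<open>1 \<le> \<phi> x\<close> b_pos mult_left_mono[OF \<open>1 \<le> \<phi> x\<close>, of "c * b * I"]
    by (simp add: divide_le_eq)
  finally show ?thesis
    unfolding P_def J_def I_def by (simp add: mult_ac)
qed

lemma lyapunov_pointwise:
  assumes "0 \<le> c"
  shows "ennreal (c * h x / \<phi> x) + (\<integral>\<^sup>+y. ennreal (c * \<phi> y / \<phi> x * far_jump x y) \<partial>\<mu>)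
    \<le> (\<integral>\<^sup>+y. ennreal (c * far_jump x y) \<partial>\<mu>) + ennreal (b * c) * indicator (ball 0 r0) x"
proof -
  define P where "P = (\<integral>y. \<phi> y * far_jump x y \<partial>\<mu>)"
  define J where "J = (\<integral>y. far_jump x y \<partial>\<mu>)"
  have "0 \<le> P" "0 \<le> J"
    unfolding P_def J_def
    by (simp_all add: integral_nonneg mult_nonneg_nonneg less_imp_le[OF phi_pos] far_jump_nonneg)
  have "(\<integral>\<^sup>+y. ennreal (c * \<phi> y / \<phi> x * far_jump x y) \<partial>\<mu>)
      = (\<integral>\<^sup>+y. ennreal (c / \<phi> x * (\<phi> y * far_jump x y)) \<partial>\<mu>)"
    by (simp add: mult_ac)
  also have "\<dots> = ennreal (c / \<phi> x * P)"
    unfolding P_def using \<open>0 \<le> c\<close> phi_pos[of x]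
    by (intro nn_integral_cmult_integrable integrable_far_jump_phi)
      (simp_all add: mult_nonneg_nonneg less_imp_le[OF phi_pos] far_jump_nonneg)
  finally have P_eq: "(\<integral>\<^sup>+y. ennreal (c * \<phi> y / \<phi> x * far_jump x y) \<partial>\<mu>) = ennreal (c / \<phi> x * P)" .
  have J_eq: "(\<integral>\<^sup>+y. ennreal (c * far_jump x y) \<partial>\<mu>) = ennreal (c * J)"
    unfolding J_def using \<open>0 \<le> c\<close> far_jump_nonneg
    by (intro nn_integral_cmult_integrable integrable_far_jump) auto
  have "0 \<le> c * h x / \<phi> x" "0 \<le> c / \<phi> x * P" "0 \<le> c * J" "0 \<le> b * c * indicator (ball 0 r0) x"
    using \<open>0 \<le> c\<close> \<open>0 \<le> P\<close> \<open>0 \<le> J\<close> h_pos phi_pos[of x] b_pos by (simp_all add: less_imp_le)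
  then have "ennreal (c * h x / \<phi> x) + ennreal (c / \<phi> x * P)
      \<le> ennreal (c * J) + ennreal (b * c * indicator (ball 0 r0) x)"
    using lyapunov_pointwise_real[OF assms, of x] unfolding P_def J_def
    by (simp only: ennreal_plus[symmetric] ennreal_leI)
  moreover have "ennreal (b * c * indicator (ball 0 r0) x) = ennreal (b * c) * indicator (ball 0 r0) x"
    by (simp add: indicator_def)
  ultimately show ?thesis
    unfolding P_eq J_eq by simp
qed

lemma lyapunov_integrated:
  assumes [measurable]: "g \<in> borel_measurable \<mu>"
  shows "(\<integral>\<^sup>+x. ennreal ((g x)\<^sup>2 * h x / \<phi> x) \<partial>\<mu>)
      + (\<integral>\<^sup>+x. \<integral>\<^sup>+y. ennreal ((g x)\<^sup>2 * \<phi> y / \<phi> x * far_jump x y) \<partial>\<mu> \<partial>\<mu>)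
    \<le> (\<integral>\<^sup>+x. \<integral>\<^sup>+y. ennreal ((g x)\<^sup>2 * far_jump x y) \<partial>\<mu> \<partial>\<mu>)
      + ennreal b * (\<integral>\<^sup>+x\<in>ball 0 r0. ennreal ((g x)\<^sup>2) \<partial>\<mu>)"
proof -
  have "(\<integral>\<^sup>+x. ennreal ((g x)\<^sup>2 * h x / \<phi> x) \<partial>\<mu>)
      + (\<integral>\<^sup>+x. \<integral>\<^sup>+y. ennreal ((g x)\<^sup>2 * \<phi> y / \<phi> x * far_jump x y) \<partial>\<mu> \<partial>\<mu>)
    = (\<integral>\<^sup>+x. ennreal ((g x)\<^sup>2 * h x / \<phi> x)
      + (\<integral>\<^sup>+y. ennreal ((g x)\<^sup>2 * \<phi> y / \<phi> x * far_jump x y) \<partial>\<mu>) \<partial>\<mu>)"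
    by (rule nn_integral_add[symmetric]) measurable
  also have "\<dots> \<le> (\<integral>\<^sup>+x. (\<integral>\<^sup>+y. ennreal ((g x)\<^sup>2 * far_jump x y) \<partial>\<mu>)
      + ennreal b * (ennreal ((g x)\<^sup>2) * indicator (ball 0 r0) x) \<partial>\<mu>)"
    using lyapunov_pointwise[of "(g _)\<^sup>2"] b_pos
    by (intro nn_integral_mono) (simp add: ennreal_mult mult.assoc)
  also have "\<dots> = (\<integral>\<^sup>+x. \<integral>\<^sup>+y. ennreal ((g x)\<^sup>2 * far_jump x y) \<partial>\<mu> \<partial>\<mu>)
      + (\<integral>\<^sup>+x. ennreal b * (ennreal ((g x)\<^sup>2) * indicator (ball 0 r0) x) \<partial>\<mu>)"
    by (rule nn_integral_add) measurable
  also have "(\<integral>\<^sup>+x. ennreal b * (ennreal ((g x)\<^sup>2) * indicator (ball 0 r0) x) \<partial>\<mu>)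
      = ennreal b * (\<integral>\<^sup>+x\<in>ball 0 r0. ennreal ((g x)\<^sup>2) \<partial>\<mu>)"
    by (rule nn_integral_cmult) measurable
  finally show ?thesis .
qed

lemma nn_integral_far_jump_swap:
  assumes [measurable]: "(\<lambda>(x, y). G x y) \<in> borel_measurable (\<mu> \<Otimes>\<^sub>M \<mu>)"
  shows "(\<integral>\<^sup>+x. \<integral>\<^sup>+y. ennreal (G y x * far_jump x y) \<partial>\<mu> \<partial>\<mu>)
    = (\<integral>\<^sup>+x. \<integral>\<^sup>+y. ennreal (G x y * far_jump x y) \<partial>\<mu> \<partial>\<mu>)"
proof -
  have "(\<integral>\<^sup>+x. \<integral>\<^sup>+y. ennreal (G y x * far_jump x y) \<partial>\<mu> \<partial>\<mu>)
      = (\<integral>\<^sup>+x. \<integral>\<^sup>+y. ennreal (G y x * far_jump y x) \<partial>\<mu> \<partial>\<mu>)"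
    by (intro nn_integral_cong) (metis far_jump_sym)
  also have "\<dots> = (\<integral>\<^sup>+x. \<integral>\<^sup>+y. ennreal (G x y * far_jump x y) \<partial>\<mu> \<partial>\<mu>)"
    by (rule nn_integral_swap[where F="\<lambda>x y. ennreal (G x y * far_jump x y)"]) measurable
  finally show ?thesis .
qed

lemma far_jump_pointwise_symmetrization:
  "ennreal ((g x)\<^sup>2 * far_jump x y) + ennreal ((g y)\<^sup>2 * far_jump x y)
    \<le> ennreal ((g y - g x)\<^sup>2 * j x y) + ennreal ((g x)\<^sup>2 * \<phi> y / \<phi> x * far_jump x y)
      + ennreal ((g y)\<^sup>2 * \<phi> x / \<phi> y * far_jump x y)"
proof -
  define q where "q = far_jump x y"
  have "q \<ge> 0"
    unfolding q_def by (rule far_jump_nonneg)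
  have nonneg: "0 \<le> q * (g x)\<^sup>2" "0 \<le> q * (g y)\<^sup>2" "0 \<le> q * (g y - g x)\<^sup>2"
    "0 \<le> q * ((g x)\<^sup>2 * \<phi> y / \<phi> x)" "0 \<le> q * ((g y)\<^sup>2 * \<phi> x / \<phi> y)"
    using \<open>q \<ge> 0\<close> phi_pos[of x] phi_pos[of y] by simp_all
  have "q * ((g x)\<^sup>2 + (g y)\<^sup>2) \<le> q * ((g y - g x)\<^sup>2 + (g x)\<^sup>2 * \<phi> y / \<phi> x + (g y)\<^sup>2 * \<phi> x / \<phi> y)"
    using sum_squares_le_weighted[OF phi_pos[of x] phi_pos[of y], of "g x" "g y"] \<open>q \<ge> 0\<close>
    by (rule mult_left_mono)
  then have "q * (g x)\<^sup>2 + q * (g y)\<^sup>2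
      \<le> q * (g y - g x)\<^sup>2 + q * ((g x)\<^sup>2 * \<phi> y / \<phi> x) + q * ((g y)\<^sup>2 * \<phi> x / \<phi> y)"
    by (simp add: distrib_left)
  then have "ennreal (q * (g x)\<^sup>2) + ennreal (q * (g y)\<^sup>2)
      \<le> ennreal (q * (g y - g x)\<^sup>2) + ennreal (q * ((g x)\<^sup>2 * \<phi> y / \<phi> x))
        + ennreal (q * ((g y)\<^sup>2 * \<phi> x / \<phi> y))"
    using nonneg by (simp only: ennreal_plus[symmetric] add_nonneg_nonneg ennreal_leI)
  also have "ennreal (q * (g y - g x)\<^sup>2) \<le> ennreal ((g y - g x)\<^sup>2 * j x y)"
    unfolding q_def by (auto simp: indicator_def mult.commute)
  finally show ?thesis
    unfolding q_def by (simp only: mult_ac add_right_mono)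
qed

lemma far_symmetrization:
  assumes [measurable]: "g \<in> borel_measurable \<mu>"
  shows "(\<integral>\<^sup>+x. \<integral>\<^sup>+y. ennreal ((g x)\<^sup>2 * far_jump x y) \<partial>\<mu> \<partial>\<mu>)
    \<le> Dform V j g + (\<integral>\<^sup>+x. \<integral>\<^sup>+y. ennreal ((g x)\<^sup>2 * \<phi> y / \<phi> x * far_jump x y) \<partial>\<mu> \<partial>\<mu>)"
proof -
  define T1 where "T1 = (\<integral>\<^sup>+x. \<integral>\<^sup>+y. ennreal ((g x)\<^sup>2 * far_jump x y) \<partial>\<mu> \<partial>\<mu>)"
  define T2 where "T2 = (\<integral>\<^sup>+x. \<integral>\<^sup>+y. ennreal ((g x)\<^sup>2 * \<phi> y / \<phi> x * far_jump x y) \<partial>\<mu> \<partial>\<mu>)"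
  have swap_T1: "(\<integral>\<^sup>+x. \<integral>\<^sup>+y. ennreal ((g y)\<^sup>2 * far_jump x y) \<partial>\<mu> \<partial>\<mu>) = T1"
    unfolding T1_def by (rule nn_integral_far_jump_swap[where G="\<lambda>x y. (g x)\<^sup>2"]) measurable
  have swap_T2: "(\<integral>\<^sup>+x. \<integral>\<^sup>+y. ennreal ((g y)\<^sup>2 * \<phi> x / \<phi> y * far_jump x y) \<partial>\<mu> \<partial>\<mu>) = T2"
    unfolding T2_def by (rule nn_integral_far_jump_swap[where G="\<lambda>x y. (g x)\<^sup>2 * \<phi> y / \<phi> x"]) measurable
  have "T1 + T1 = T1 + (\<integral>\<^sup>+x. \<integral>\<^sup>+y. ennreal ((g y)\<^sup>2 * far_jump x y) \<partial>\<mu> \<partial>\<mu>)"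
    by (simp only: swap_T1)
  also have "\<dots> = (\<integral>\<^sup>+x. \<integral>\<^sup>+y. ennreal ((g x)\<^sup>2 * far_jump x y) + ennreal ((g y)\<^sup>2 * far_jump x y) \<partial>\<mu> \<partial>\<mu>)"
    unfolding T1_def by (rule nn_integral_double_add[symmetric]) measurable
  also have "\<dots> \<le> (\<integral>\<^sup>+x. \<integral>\<^sup>+y. (ennreal ((g y - g x)\<^sup>2 * j x y)
        + ennreal ((g x)\<^sup>2 * \<phi> y / \<phi> x * far_jump x y))
      + ennreal ((g y)\<^sup>2 * \<phi> x / \<phi> y * far_jump x y) \<partial>\<mu> \<partial>\<mu>)"
    using far_jump_pointwise_symmetrization by (intro nn_integral_mono) simp
  also have "\<dots> = (\<integral>\<^sup>+x. \<integral>\<^sup>+y. ennreal ((g y - g x)\<^sup>2 * j x y)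
        + ennreal ((g x)\<^sup>2 * \<phi> y / \<phi> x * far_jump x y) \<partial>\<mu> \<partial>\<mu>)
      + (\<integral>\<^sup>+x. \<integral>\<^sup>+y. ennreal ((g y)\<^sup>2 * \<phi> x / \<phi> y * far_jump x y) \<partial>\<mu> \<partial>\<mu>)"
    by (rule nn_integral_double_add) measurable
  also have "(\<integral>\<^sup>+x. \<integral>\<^sup>+y. ennreal ((g y - g x)\<^sup>2 * j x y)
        + ennreal ((g x)\<^sup>2 * \<phi> y / \<phi> x * far_jump x y) \<partial>\<mu> \<partial>\<mu>) = 2 * Dform V j g + T2"
    unfolding double_Dform T2_def by (rule nn_integral_double_add) measurable
  finally have "2 * T1 \<le> 2 * (Dform V j g + T2)"
    unfolding swap_T2 by (simp add: mult_2 distrib_left add_ac)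
  then have "T1 \<le> Dform V j g + T2"
    using ennreal_mult_le_mult_iff[of 2 T1 "Dform V j g + T2"] by simp
  then show ?thesis
    unfolding T1_def T2_def .
qed

lemma far_energy_finite:
  assumes [measurable]: "g \<in> borel_measurable \<mu>" and g_bound: "\<And>x. \<bar>g x\<bar> \<le> G"
  shows "(\<integral>\<^sup>+x. \<integral>\<^sup>+y. ennreal ((g x)\<^sup>2 * far_jump x y) \<partial>\<mu> \<partial>\<mu>) < \<infinity>"
proof -
  have pointwise: "ennreal ((g x)\<^sup>2 * far_jump x y) \<le> ennreal (G\<^sup>2) * ennreal (min 1 ((norm (x - y))\<^sup>2) * j x y)"
    for x y
  proof (cases "1 < norm (x - y)")
    case True
    then have "x \<noteq> y" "min 1 ((norm (x - y))\<^sup>2) = 1"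
      by (auto simp: one_le_power)
    moreover have "(g x)\<^sup>2 \<le> G\<^sup>2"
      using g_bound[of x] by (metis abs_ge_zero power2_abs power_mono)
    ultimately have "(g x)\<^sup>2 * j x y \<le> G\<^sup>2 * j x y"
      using j_nonneg by (intro mult_right_mono) auto
    with True \<open>min 1 _ = 1\<close> show ?thesis
      by (simp add: ennreal_mult'[symmetric] ennreal_leI)
  qed simp
  have "(\<integral>\<^sup>+x. \<integral>\<^sup>+y. ennreal ((g x)\<^sup>2 * far_jump x y) \<partial>\<mu> \<partial>\<mu>) \<le> (\<integral>\<^sup>+x. ennreal (G\<^sup>2) * I1 V j x \<partial>\<mu>)"
    unfolding I1_def
  proof (intro nn_integral_mono)
    fix x
    show "(\<integral>\<^sup>+y. ennreal ((g x)\<^sup>2 * far_jump x y) \<partial>\<mu>)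
        \<le> ennreal (G\<^sup>2) * (\<integral>\<^sup>+y. ennreal (min 1 ((norm (x - y))\<^sup>2) * j x y) \<partial>\<mu>)"
      using pointwise by (subst nn_integral_cmult[symmetric]) (measurable, rule nn_integral_mono)
  qed
  also have "\<dots> = ennreal (G\<^sup>2) * (\<integral>\<^sup>+x. I1 V j x \<partial>\<mu>)"
    unfolding I1_def by (rule nn_integral_cmult) measurable
  also have "\<dots> < \<infinity>"
    using I1_L1 by (simp add: ennreal_mult_less_top)
  finally show ?thesis .
qed

lemma lyapunov_weighted_bound:
  assumes [measurable]: "g \<in> borel_measurable \<mu>" and g_bound: "\<And>x. \<bar>g x\<bar> \<le> G"
  shows "(\<integral>\<^sup>+x. ennreal ((g x)\<^sup>2 * h x / \<phi> x) \<partial>\<mu>)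
    \<le> Dform V j g + ennreal b * (\<integral>\<^sup>+x\<in>ball 0 r0. ennreal ((g x)\<^sup>2) \<partial>\<mu>)"
proof -
  define W where "W = (\<integral>\<^sup>+x. ennreal ((g x)\<^sup>2 * h x / \<phi> x) \<partial>\<mu>)"
  define R where "R = (\<integral>\<^sup>+x\<in>ball 0 r0. ennreal ((g x)\<^sup>2) \<partial>\<mu>)"
  define T1 where "T1 = (\<integral>\<^sup>+x. \<integral>\<^sup>+y. ennreal ((g x)\<^sup>2 * far_jump x y) \<partial>\<mu> \<partial>\<mu>)"
  define T2 where "T2 = (\<integral>\<^sup>+x. \<integral>\<^sup>+y. ennreal ((g x)\<^sup>2 * \<phi> y / \<phi> x * far_jump x y) \<partial>\<mu> \<partial>\<mu>)"
  have integrated: "W + T2 \<le> T1 + ennreal b * R"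
    unfolding W_def T1_def T2_def R_def by (rule lyapunov_integrated) simp
  have "(g x)\<^sup>2 \<le> G\<^sup>2" for x
    using g_bound[of x] by (metis abs_ge_zero power2_abs power_mono)
  then have "R \<le> (\<integral>\<^sup>+x. ennreal (G\<^sup>2) \<partial>\<mu>)"
    unfolding R_def by (intro nn_integral_mono) (auto simp: indicator_def intro!: ennreal_leI)
  then have "R < \<infinity>"
    using mu.emeasure_space_1 by (simp add: le_less_trans[OF _ ennreal_less_top])
  have "T2 \<le> W + T2"
    by simp
  also have "\<dots> \<le> T1 + ennreal b * R"
    by (rule integrated)
  also have "\<dots> < \<infinity>"
    using far_energy_finite[OF assms] \<open>R < \<infinity>\<close> unfolding T1_def by (simp add: ennreal_mult_less_top)
  finally have "T2 < \<infinity>" .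
  \<comment> \<open>being finite, \<open>T2\<close> cancels between the Lyapunov estimate and the symmetrisation\<close>
  have "T2 + W = W + T2"
    by (rule add.commute)
  also have "\<dots> \<le> T1 + ennreal b * R"
    by (rule integrated)
  also have "\<dots> \<le> (Dform V j g + T2) + ennreal b * R"
    using far_symmetrization[OF assms(1)] unfolding T1_def T2_def by (rule add_right_mono)
  also have "\<dots> = T2 + (Dform V j g + ennreal b * R)"
    by (simp add: ac_simps)
  finally have "T2 + W \<le> T2 + (Dform V j g + ennreal b * R)" .
  with \<open>T2 < \<infinity>\<close>
  show ?thesis
    unfolding W_def R_def by (auto simp: ennreal_add_left_cancel_le)
qed

lemma integral_h_div_phi_finite: "(\<integral>\<^sup>+x. ennreal (h x / \<phi> x) \<partial>\<mu>) < \<infinity>"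
proof -
  have "(\<integral>\<^sup>+x. ennreal (h x / \<phi> x) \<partial>\<mu>) \<le> Dform V j (\<lambda>_. 1) + ennreal b * (\<integral>\<^sup>+x\<in>ball 0 r0. ennreal (1\<^sup>2) \<partial>\<mu>)"
    using lyapunov_weighted_bound[of "\<lambda>_. 1" 1] by simp
  also have "\<dots> = ennreal b * emeasure \<mu> (ball 0 r0)"
    by (simp add: Dform_def)
  also have "\<dots> < \<infinity>"
    using emeasure_mu_finite by (simp add: ennreal_mult_less_top)
  finally show ?thesis .
qed

section \<open>The weighted Poincare inequality\<close>

lemma weighted_bound_centered:
  assumes [measurable]: "f \<in> borel_measurable \<mu>" "B \<in> sets borel"
    and "ball 0 r0 \<subseteq> B" and f_bound: "\<And>x. \<bar>f x\<bar> \<le> F" and mean_zero: "(\<integral>x. f x \<partial>\<mu>) = 0"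
  shows "(\<integral>\<^sup>+x. ennreal ((f x)\<^sup>2 * h x / \<phi> x) \<partial>\<mu>)
    \<le> 2 * (1 + (\<integral>\<^sup>+x. ennreal (\<phi> x / h x) \<partial>\<mu>) * (\<integral>\<^sup>+x. ennreal (h x / \<phi> x) \<partial>\<mu>))
        * (Dform V j f + ennreal b * (\<integral>\<^sup>+x\<in>B. ennreal ((f z - f x)\<^sup>2) \<partial>\<mu>))"
proof -
  have diff_bound: "\<bar>f x - f z\<bar> \<le> 2 * F" for x
    using f_bound[of x] f_bound[of z] by linarith
  have "(\<integral>\<^sup>+x. ennreal ((f x)\<^sup>2 * h x / \<phi> x) \<partial>\<mu>)
    \<le> 2 * (1 + (\<integral>\<^sup>+x. ennreal (\<phi> x / h x) \<partial>\<mu>) * (\<integral>\<^sup>+x. ennreal (h x / \<phi> x) \<partial>\<mu>))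
        * (\<integral>\<^sup>+x. ennreal ((f x - f z)\<^sup>2 * h x / \<phi> x) \<partial>\<mu>)"
    using mu.square_weighted_le_centered[of f "\<lambda>x. h x / \<phi> x", OF _ _ f_bound _ mean_zero] h_pos phi_pos
    by simp
  also have "(\<integral>\<^sup>+x. ennreal ((f x - f z)\<^sup>2 * h x / \<phi> x) \<partial>\<mu>)
      \<le> Dform V j (\<lambda>x. f x - f z) + ennreal b * (\<integral>\<^sup>+x\<in>ball 0 r0. ennreal ((f x - f z)\<^sup>2) \<partial>\<mu>)"
    by (rule lyapunov_weighted_bound[OF _ diff_bound]) measurable
  also have "\<dots> \<le> Dform V j f + ennreal b * (\<integral>\<^sup>+x\<in>B. ennreal ((f z - f x)\<^sup>2) \<partial>\<mu>)"
    using \<open>ball 0 r0 \<subseteq> B\<close>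
    by (auto simp: Dform_def power2_commute indicator_def intro!: mult_left_mono nn_integral_mono)
  finally show ?thesis
    by (simp add: mult_left_mono)
qed

lemma weighted_bound_averaged:
  assumes [measurable]: "f \<in> borel_measurable \<mu>" "B \<in> sets borel"
    and "ball 0 r0 \<subseteq> B" and "\<And>x. \<bar>f x\<bar> \<le> F" and "(\<integral>x. f x \<partial>\<mu>) = 0"
    and poincare: "(\<integral>\<^sup>+z\<in>B. (\<integral>\<^sup>+x\<in>B. ennreal ((f z - f x)\<^sup>2) \<partial>\<mu>) \<partial>\<mu>) \<le> ennreal P * Dform V j f"
  shows "(\<integral>\<^sup>+x. ennreal ((f x)\<^sup>2 * h x / \<phi> x) \<partial>\<mu>) * emeasure \<mu> B
    \<le> 2 * (1 + (\<integral>\<^sup>+x. ennreal (\<phi> x / h x) \<partial>\<mu>) * (\<integral>\<^sup>+x. ennreal (h x / \<phi> x) \<partial>\<mu>))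
        * (emeasure \<mu> B + ennreal b * ennreal P) * Dform V j f"
proof -
  define A where "A = 2 * (1 + (\<integral>\<^sup>+x. ennreal (\<phi> x / h x) \<partial>\<mu>) * (\<integral>\<^sup>+x. ennreal (h x / \<phi> x) \<partial>\<mu>))"
  define R where "R z = (\<integral>\<^sup>+x\<in>B. ennreal ((f z - f x)\<^sup>2) \<partial>\<mu>)" for z
  have [measurable]: "R \<in> borel_measurable \<mu>"
    unfolding R_def by measurable
  have "(\<integral>\<^sup>+x. ennreal ((f x)\<^sup>2 * h x / \<phi> x) \<partial>\<mu>) * emeasure \<mu> B
      = (\<integral>\<^sup>+z\<in>B. (\<integral>\<^sup>+x. ennreal ((f x)\<^sup>2 * h x / \<phi> x) \<partial>\<mu>) \<partial>\<mu>)"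
    by (simp add: nn_integral_cmult_indicator)
  also have "\<dots> \<le> (\<integral>\<^sup>+z\<in>B. A * (Dform V j f + ennreal b * R z) \<partial>\<mu>)"
    unfolding A_def R_def using assms(3-5)
    by (intro nn_integral_mono mult_right_mono weighted_bound_centered) simp_all
  also have "\<dots> = A * (Dform V j f * emeasure \<mu> B + ennreal b * (\<integral>\<^sup>+z\<in>B. R z \<partial>\<mu>))"
  proof -
    have "(\<integral>\<^sup>+z\<in>B. A * (Dform V j f + ennreal b * R z) \<partial>\<mu>)
        = (\<integral>\<^sup>+z. (A * Dform V j f) * indicator B z + (A * ennreal b) * (R z * indicator B z) \<partial>\<mu>)"
      by (intro nn_integral_cong) (simp add: distrib_left distrib_right mult_ac)
    also have "\<dots> = (A * Dform V j f) * emeasure \<mu> B + (A * ennreal b) * (\<integral>\<^sup>+z\<in>B. R z \<partial>\<mu>)"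
      by (subst nn_integral_add) (simp_all add: nn_integral_cmult nn_integral_cmult_indicator)
    finally show ?thesis
      by (simp add: distrib_left mult_ac)
  qed
  also have "\<dots> \<le> A * (Dform V j f * emeasure \<mu> B + ennreal b * (ennreal P * Dform V j f))"
    using poincare unfolding R_def by (intro mult_left_mono add_left_mono) simp_all
  also have "\<dots> = A * (emeasure \<mu> B + ennreal b * ennreal P) * Dform V j f"
    by (simp add: algebra_simps)
  finally show ?thesis
    unfolding A_def .
qed

lemma weighted_poincare:
  assumes phi_h_int: "(\<integral>\<^sup>+x. ennreal (\<phi> x / h x) \<partial>\<mu>) < \<infinity>"
    and "r > 0" "r0 \<le> r" "kappa V j r < \<infinity>"
  shows "\<exists>C1>0. \<forall>f. f \<in> borel_measurable \<mu> \<and> bounded (range f) \<and> (\<integral>x. f x \<partial>\<mu>) = 0 \<longrightarrow>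
           (\<integral>\<^sup>+x. ennreal ((f x)\<^sup>2 * h x / \<phi> x) \<partial>\<mu>) \<le> ennreal C1 * Dform V j f"
proof -
  obtain P where poincare: "\<And>f. f \<in> borel_measurable \<mu> \<Longrightarrow>
    (\<integral>\<^sup>+x\<in>ball 0 r. (\<integral>\<^sup>+y\<in>ball 0 r. ennreal ((f x - f y)\<^sup>2) \<partial>\<mu>) \<partial>\<mu>) \<le> ennreal P * Dform V j f"
    using local_poincare[OF assms(2,4)] by blast
  define K where "K = 2 * (1 + (\<integral>\<^sup>+x. ennreal (\<phi> x / h x) \<partial>\<mu>) * (\<integral>\<^sup>+x. ennreal (h x / \<phi> x) \<partial>\<mu>))
    * (emeasure \<mu> (ball 0 r) + ennreal b * ennreal P)"
  have m: "emeasure \<mu> (ball 0 r) \<noteq> 0" "emeasure \<mu> (ball 0 r) \<noteq> \<infinity>"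
    using emeasure_muV_ball_pos[OF V_meas V_int \<open>r > 0\<close>] emeasure_mu_finite by auto
  show ?thesis
  proof (rule ex_real_constant_of_finite)
    have "K \<noteq> \<infinity>"
      unfolding K_def using phi_h_int integral_h_div_phi_finite m
      by (simp add: ennreal_mult_eq_top_iff top.not_eq_extremum)
    then have "K / emeasure \<mu> (ball 0 r) \<noteq> top"
      using m by (simp add: ennreal_divide_eq_top_iff)
    then show "K / emeasure \<mu> (ball 0 r) < \<infinity>"
      by (simp add: top.not_eq_extremum)
  next
    fix f :: "'a \<Rightarrow> real"
    assume f: "f \<in> borel_measurable \<mu> \<and> bounded (range f) \<and> (\<integral>x. f x \<partial>\<mu>) = 0"
    then obtain F where "\<And>x. \<bar>f x\<bar> \<le> F"
      unfolding bounded_real by auto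
    with f have "(\<integral>\<^sup>+x. ennreal ((f x)\<^sup>2 * h x / \<phi> x) \<partial>\<mu>) * emeasure \<mu> (ball 0 r) \<le> K * Dform V j f"
      unfolding K_def using \<open>r0 \<le> r\<close> poincare
      by (intro weighted_bound_averaged) (auto simp: subset_ball)
    then show "(\<integral>\<^sup>+x. ennreal ((f x)\<^sup>2 * h x / \<phi> x) \<partial>\<mu>) \<le> K / emeasure \<mu> (ball 0 r) * Dform V j f"
      using m by (rule ennreal_le_divide_right)
  qed
qed

end

theorem theorem3p4:
  fixes V :: "'a::euclidean_space \<Rightarrow> real" and j :: "'a \<Rightarrow> 'a \<Rightarrow> real"
    and \<phi> h :: "'a \<Rightarrow> real" and b r0 :: real
  assumes V_meas: "V \<in> borel_measurable borel"
    and V_locbdd: "locbdd_real V"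
    and V_int: "integrable lborel (\<lambda>x. exp (- V x))"
    and j_meas: "(\<lambda>(x, y). j x y) \<in> borel_measurable borel"
    and j_nonneg: "\<forall>x y. x \<noteq> y \<longrightarrow> 0 \<le> j x y"
    and j_sym: "\<forall>x y. x \<noteq> y \<longrightarrow> j x y = j y x"
    and I1_L1: "(\<integral>\<^sup>+ x. I1 V j x \<partial>muV V) < \<infinity>"
    and I1_locbdd: "locbdd_ennreal (I1 V j)"
    and I2_locbdd: "locbdd_ennreal (I2 V j)"
    and phi_C: "\<phi> \<in> Chat V j"
    and phi_ge: "\<forall>x. \<phi> x \<ge> 1"
    and h_smooth: "smooth h"
    and h_pos: "\<forall>x. h x > 0"
    and b_pos: "b > 0" and r0_pos: "r0 > 0"
    and lyap: "\<forall>x. Lhat V j \<phi> x \<le> - h x + b * indicator (ball 0 r0) x"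
    and phi_h_int: "(\<integral>\<^sup>+ x. ennreal (\<phi> x / h x) \<partial>muV V) < \<infinity>"
    and kappa_fin: "\<forall>r>1. kappa V j r < \<infinity>"
  shows "\<exists>C1>0. \<forall>f. smooth_bdd f \<and> (\<integral>x. f x \<partial>muV V) = 0 \<longrightarrow>
           (\<integral>\<^sup>+ x. ennreal ((f x)\<^sup>2 * h x / \<phi> x) \<partial>muV V) \<le> ennreal C1 * Dform V j f"
proof -
  interpret lyapunov_kernel V j \<phi> h b r0
    by unfold_locales (fact assms)+
  obtain C1 where "C1 > 0" and bound: "\<forall>f. f \<in> borel_measurable (muV V) \<and> bounded (range f) \<and>
      (\<integral>x. f x \<partial>muV V) = 0 \<longrightarrow> (\<integral>\<^sup>+ x. ennreal ((f x)\<^sup>2 * h x / \<phi> x) \<partial>muV V) \<le> ennreal C1 * Dform V j f"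
    using weighted_poincare[OF phi_h_int, of "max 2 r0"] kappa_fin by (auto simp: less_max_iff_disj)
  have "smooth_bdd f \<Longrightarrow> f \<in> borel_measurable (muV V) \<and> bounded (range f)" for f
    using continuous_on_bounded_smooth_bdd measurable_muV_continuous by blast
  with \<open>C1 > 0\<close> bound show ?thesis
    by blast
qed

end
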